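(* Let $m\geq 1$ be an integer and let $G$ be a connected graph with $n$ vertices and $n-1+m$ edges. Then the minor-3-core of $G$ has at most $2(m-1)$ vertices.
   Context: Graphs are simple and undirected. A minor of $G$ is a graph obtained from $G$ by vertex contractions (contracting a vertex $u$ into a neighbour $v$, i.e. an edge contraction keeping the name $v$) and subgraph operations. A minor-3-core of $G$ is a minor $H$ of $G$ with minimum degree at least $3$ such that no minor of $G$ with minimum degree at least $3$ has more edges than $H$; all minor-3-cores of $G$ are isomorphic, so one speaks of the minor-3-core. Equivalently, it is the graph obtained by repeatedly contracting a vertex of degree at most $2$ into a neighbour and deleting isolated vertices until neither operation applies. *)

theory Defs
  imports Main
begin

definition simple_graph :: "'a set \<Rightarrow> 'a set set \<Rightarrow> bool" where
  "simple_graph V E \<longleftrightarrow> finite V \<and>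
     (\<forall>e\<in>E. \<exists>u v. e = {u, v} \<and> u \<noteq> v \<and> u \<in> V \<and> v \<in> V)"

definition degree :: "'a set set \<Rightarrow> 'a \<Rightarrow> nat" where
  "degree E v = card {e \<in> E. v \<in> e}"

definition min_degree_ge :: "nat \<Rightarrow> 'a set \<Rightarrow> 'a set set \<Rightarrow> bool" where
  "min_degree_ge k V E \<longleftrightarrow> (\<forall>v\<in>V. k \<le> degree E v)"

definition connected_graph :: "'a set \<Rightarrow> 'a set set \<Rightarrow> bool" where
  "connected_graph V E \<longleftrightarrow> (\<forall>u\<in>V. \<forall>v\<in>V. (\<lambda>x y. {x, y} \<in> E)\<^sup>*\<^sup>* u v)"

text \<open>Contracting vertex u into its neighbour v (the merged vertex keeps the name v).\<close>

definition contract :: "'a \<Rightarrow> 'a \<Rightarrow> 'a set \<times> 'a set set \<Rightarrow> 'a set \<times> 'a set set" where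
  "contract u v G = (fst G - {u},
     {e \<in> snd G. u \<notin> e} \<union> {{w, v} | w. {w, u} \<in> snd G \<and> w \<noteq> v})"

definition subgraph :: "'a set \<times> 'a set set \<Rightarrow> 'a set \<times> 'a set set \<Rightarrow> bool" where
  "subgraph H G \<longleftrightarrow> fst H \<subseteq> fst G \<and> snd H \<subseteq> snd G \<and> (\<forall>e\<in>snd H. e \<subseteq> fst H)"

definition minor_step :: "'a set \<times> 'a set set \<Rightarrow> 'a set \<times> 'a set set \<Rightarrow> bool" where
  "minor_step G H \<longleftrightarrow> (\<exists>u v. {u, v} \<in> snd G \<and> u \<noteq> v \<and> H = contract u v G) \<or> subgraph H G"

definition is_minor :: "'a set \<times> 'a set set \<Rightarrow> 'a set \<times> 'a set set \<Rightarrow> bool" where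
  "is_minor H G \<longleftrightarrow> minor_step\<^sup>*\<^sup>* G H"

definition minor_3_core :: "'a set \<times> 'a set set \<Rightarrow> 'a set \<times> 'a set set \<Rightarrow> bool" where
  "minor_3_core H G \<longleftrightarrow> is_minor H G \<and> min_degree_ge 3 (fst H) (snd H) \<and>
     (\<forall>H'. is_minor H' G \<and> min_degree_ge 3 (fst H') (snd H') \<longrightarrow> card (snd H') \<le> card (snd H))"

end

(*
  The circuit rank |E| - |V| + c, with c the number of connected components, never increases
  along minor operations: contracting an edge loses one vertex and at least one edge without
  creating components, deleting an edge creates at most one new component, and deleting an
  isolated vertex removes its component along with it. G has circuit rank m, and a nonempty
  minor H of minimum degree at least 3 has at least one component, so
  |E_H| - |V_H| <= m - 1, while 3 |V_H| <= 2 |E_H| by the handshake lemma; hence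
  |V_H| <= 2 (m - 1).
*)

theory Submission
  imports Defs
begin

lemma card_image_le_card_image:
  assumes "finite A" and "\<And>x y. x \<in> A \<Longrightarrow> y \<in> A \<Longrightarrow> h x = h y \<Longrightarrow> g x = g y"
  shows "card (g ` A) \<le> card (h ` A)"
proof -
  have "g (inv_into A h (h x)) = g x" if "x \<in> A" for x
    by (rule assms(2)) (use that in \<open>auto intro: inv_into_into f_inv_into_f\<close>)
  then have "g ` A = (g \<circ> inv_into A h) ` h ` A"
    by (simp add: image_comp)
  then show ?thesis
    using assms(1) by (simp add: card_image_le)
qed

definition reachable :: "'a set set \<Rightarrow> 'a \<Rightarrow> 'a \<Rightarrow> bool" where
  "reachable E = (\<lambda>x y. {x, y} \<in> E)\<^sup>*\<^sup>*"

definition component :: "'a set set \<Rightarrow> 'a \<Rightarrow> 'a set" where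
  "component E x = {y. reachable E x y}"

definition num_components :: "'a set \<Rightarrow> 'a set set \<Rightarrow> nat" where
  "num_components V E = card (component E ` V)"

definition circuit_rank :: "'a set \<Rightarrow> 'a set set \<Rightarrow> int" where
  "circuit_rank V E = int (card E) - int (card V) + int (num_components V E)"

lemma reachable_refl [simp]: "reachable E x x"
  by (simp add: reachable_def)

lemma reachable_edge: "{x, y} \<in> E \<Longrightarrow> reachable E x y"
  unfolding reachable_def by (rule r_into_rtranclp)

lemma reachable_trans: "reachable E x y \<Longrightarrow> reachable E y z \<Longrightarrow> reachable E x z"
  unfolding reachable_def by (rule rtranclp_trans)

lemma reachable_sym: "reachable E x y \<Longrightarrow> reachable E y x"
proof -
  have "symp (\<lambda>x y. {x, y} \<in> E)"
    by (auto intro: sympI simp: insert_commute)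
  then show "reachable E x y \<Longrightarrow> reachable E y x"
    unfolding reachable_def by (metis symp_rtranclp sympD)
qed

lemma component_eq_iff: "component E x = component E y \<longleftrightarrow> reachable E x y"
proof
  assume "component E x = component E y"
  then show "reachable E x y"
    unfolding component_def by (metis mem_Collect_eq reachable_refl)
next
  assume "reachable E x y"
  then show "component E x = component E y"
    unfolding component_def by (blast intro: reachable_trans reachable_sym)
qed

lemma reachable_insert_edgeE:
  assumes "reachable (insert {a, b} E) x y"
  obtains "reachable E x y" | "reachable E x a" "reachable E b y" | "reachable E x b" "reachable E a y"
  using assms unfolding reachable_def[of "insert {a, b} E"]
proof (induction arbitrary: thesis rule: rtranclp_induct)
  case base
  then show ?case by simp
next
  case (step y z)
  from step.hyps(2) consider "{y, z} \<in> E" | "y = a" "z = b" | "y = b" "z = a"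
    by (auto simp: doubleton_eq_iff)
  then show ?case
  proof cases
    case 1
    then show ?thesis
      using step.IH step.prems reachable_edge reachable_trans by metis
  next
    case 2
    then show ?thesis
      using step.IH step.prems reachable_refl reachable_trans by metis
  next
    case 3
    then show ?thesis
      using step.IH step.prems reachable_refl reachable_trans by metis
  qed
qed

lemma num_components_le_insert_edge:
  assumes "finite V"
  shows "num_components V E \<le> num_components V (insert {a, b} E) + 1"
proof -
  let ?E' = "insert {a, b} E"
  \<comment> \<open>away from the component of a, the new edge merges no components\<close>
  define V0 where "V0 = {x \<in> V. \<not> reachable E x a}"
  have "finite V0"
    using assms by (simp add: V0_def)
  have "component E ` V \<subseteq> insert (component E a) (component E ` V0)"
  proof
    fix C
    assume "C \<in> component E ` V"
    then obtain x where "x \<in> V" "C = component E x" by blast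
    then show "C \<in> insert (component E a) (component E ` V0)"
      by (cases "reachable E x a") (auto simp: V0_def component_eq_iff)
  qed
  then have "num_components V E \<le> card (insert (component E a) (component E ` V0))"
    unfolding num_components_def using \<open>finite V0\<close> by (simp add: card_mono)
  also have "\<dots> \<le> card (component E ` V0) + 1"
    by (simp add: card_insert_if \<open>finite V0\<close>)
  also have "card (component E ` V0) \<le> card (component ?E' ` V0)"
  proof (rule card_image_le_card_image[OF \<open>finite V0\<close>])
    fix x y
    assume "x \<in> V0" "y \<in> V0" "component ?E' x = component ?E' y"
    then have "reachable ?E' x y" "\<not> reachable E x a" "\<not> reachable E y a"
      by (auto simp: component_eq_iff V0_def)
    then show "component E x = component E y"
      by (elim reachable_insert_edgeE) (metis component_eq_iff reachable_sym)+
  qed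
  also have "card (component ?E' ` V0) \<le> num_components V ?E'"
    unfolding num_components_def using assms by (intro card_mono image_mono) (auto simp: V0_def)
  finally show ?thesis by simp
qed

lemma num_components_le_add_edges:
  assumes "finite V" "finite D" "\<forall>e\<in>D. \<exists>a b. e = {a, b}"
  shows "num_components V E \<le> num_components V (E \<union> D) + card D"
  using assms(2,3)
proof (induction D rule: finite_induct)
  case empty
  then show ?case by simp
next
  case (insert e D)
  then obtain a b where "e = {a, b}" by blast
  with num_components_le_insert_edge[OF assms(1), of "E \<union> D" a b] insert show ?case
    by simp
qed

lemma num_components_add_isolated:
  assumes "finite V" "V' \<subseteq> V" "\<forall>e\<in>E. e \<subseteq> V'"
  shows "num_components V E = num_components V' E + card (V - V')"
proof -
  have isolated: "component E x = {x}" if "x \<notin> V'" for x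
  proof -
    have "y = x" if "reachable E x y" for y
      using that unfolding reachable_def
      by (rule converse_rtranclpE) (use assms(3) \<open>x \<notin> V'\<close> in auto)
    then show ?thesis
      by (auto simp: component_def)
  qed
  have "component E ` V = component E ` V' \<union> component E ` (V - V')"
    using assms(2) by blast
  moreover have "component E y \<noteq> component E x" if "y \<in> V'" "x \<notin> V'" for x y
    using isolated[OF that(2)] that by (metis component_def mem_Collect_eq reachable_refl singletonD)
  then have "component E ` V' \<inter> component E ` (V - V') = {}"
    by blast
  moreover have "inj_on (component E) (V - V')"
    using isolated by (auto intro!: inj_onI)
  ultimately show ?thesis
    unfolding num_components_def using assms(1,2)
    by (simp add: card_Un_disjoint card_image finite_subset)
qed

lemma simple_graph_finite_edges:
  assumes "simple_graph V E"
  shows "finite E"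
proof -
  have "E \<subseteq> Pow V"
    using assms unfolding simple_graph_def by auto
  with assms show ?thesis
    unfolding simple_graph_def by (meson finite_Pow_iff finite_subset)
qed

lemma simple_graph_subgraph:
  assumes "simple_graph V E" "V' \<subseteq> V" "F \<subseteq> E" "\<forall>e\<in>F. e \<subseteq> V'"
  shows "simple_graph V' F"
  unfolding simple_graph_def
proof (intro conjI ballI)
  show "finite V'"
    using assms(1,2) by (meson finite_subset simple_graph_def)
  fix e
  assume "e \<in> F"
  then obtain u v where "e = {u, v}" "u \<noteq> v"
    using assms(1,3) unfolding simple_graph_def by blast
  with \<open>e \<in> F\<close> assms(4) show "\<exists>u v. e = {u, v} \<and> u \<noteq> v \<and> u \<in> V' \<and> v \<in> V'"
    by blast
qed

lemma circuit_rank_subgraph_le: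
  assumes "simple_graph V E" "V' \<subseteq> V" "F \<subseteq> E" "\<forall>e\<in>F. e \<subseteq> V'"
  shows "circuit_rank V' F \<le> circuit_rank V E"
proof -
  have "finite V" "finite E"
    using assms(1) simple_graph_finite_edges simple_graph_def by blast+
  have "\<forall>e\<in>E - F. \<exists>a b. e = {a, b}"
    using assms(1) unfolding simple_graph_def by blast
  then have "num_components V F \<le> num_components V E + card (E - F)"
    using num_components_le_add_edges[OF \<open>finite V\<close>, of "E - F" F] \<open>finite E\<close> assms(3)
    by (simp add: Un_absorb1)
  moreover have "num_components V F = num_components V' F + card (V - V')"
    using num_components_add_isolated[OF \<open>finite V\<close> assms(2,4)] .
  moreover have "card (E - F) + card F = card E" "card (V - V') + card V' = card V"
    using assms(2,3) \<open>finite V\<close> \<open>finite E\<close>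
    by (metis card_Diff_subset card_mono finite_subset le_add_diff_inverse2)+
  ultimately show ?thesis
    unfolding circuit_rank_def by linarith
qed

lemma reachable_map:
  assumes "\<And>x y. {x, y} \<in> E \<Longrightarrow> f x \<noteq> f y \<Longrightarrow> {f x, f y} \<in> F"
    and "reachable E x y"
  shows "reachable F (f x) (f y)"
  using assms(2) unfolding reachable_def[of E]
proof (induction rule: rtranclp_induct)
  case base
  then show ?case by simp
next
  case (step y z)
  then have "reachable F (f y) (f z)"
    using assms(1) by (cases "f y = f z") (auto intro: reachable_edge)
  with step.IH show ?case
    by (rule reachable_trans)
qed

lemma num_components_image_le:
  assumes "finite V" and "\<And>x y. {x, y} \<in> E \<Longrightarrow> f x \<noteq> f y \<Longrightarrow> {f x, f y} \<in> F"
  shows "num_components (f ` V) F \<le> num_components V E"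
proof -
  have "num_components (f ` V) F = card ((\<lambda>x. component F (f x)) ` V)"
    unfolding num_components_def by (simp add: image_image)
  also have "\<dots> \<le> num_components V E"
    unfolding num_components_def using assms
    by (intro card_image_le_card_image) (auto simp: component_eq_iff intro: reachable_map)
  finally show ?thesis .
qed

lemma contract_eq_rename:
  assumes "\<forall>e\<in>E. \<exists>a b. e = {a, b} \<and> a \<noteq> b"
  shows "contract u v (V, E) = (V - {u}, (`) (id(u := v)) ` E - {{v}})"
proof -
  let ?r = "id(u := v)"
  have "{e \<in> E. u \<notin> e} \<union> {{w, v} | w. {w, u} \<in> E \<and> w \<noteq> v} = (`) ?r ` E - {{v}}"
  proof (intro equalityI subsetI)
    fix e
    assume "e \<in> {e \<in> E. u \<notin> e} \<union> {{w, v} | w. {w, u} \<in> E \<and> w \<noteq> v}"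
    then consider "e \<in> E" "u \<notin> e" | w where "e = {w, v}" "{w, u} \<in> E" "w \<noteq> v"
      by blast
    then show "e \<in> (`) ?r ` E - {{v}}"
    proof cases
      case 1
      then have "?r ` e = e" "e \<noteq> {v}"
        using assms by (auto simp: doubleton_eq_iff)
      with 1 show ?thesis
        by (metis DiffI image_eqI singletonD)
    next
      case 2
      then have "w \<noteq> u"
        using assms by (metis doubleton_eq_iff)
      then have "?r ` {w, u} = e" "e \<noteq> {v}"
        using 2 by (auto simp: doubleton_eq_iff)
      with 2 show ?thesis
        by (metis DiffI image_eqI singletonD)
    qed
  next
    fix e
    assume "e \<in> (`) ?r ` E - {{v}}"
    then obtain e0 where "e0 \<in> E" "e = ?r ` e0" "e \<noteq> {v}"
      by blast
    moreover obtain a b where "e0 = {a, b}" "a \<noteq> b"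
      using assms \<open>e0 \<in> E\<close> by blast
    ultimately have "{a, b} \<in> E" "a \<noteq> b" "e = {?r a, ?r b}" "e \<noteq> {v}"
      by auto
    then show "e \<in> {e \<in> E. u \<notin> e} \<union> {{w, v} | w. {w, u} \<in> E \<and> w \<noteq> v}"
      by (cases "a = u"; cases "b = u") (auto simp: insert_commute)
  qed
  then show ?thesis
    unfolding contract_def by simp
qed

lemma simple_graph_contract:
  assumes "simple_graph V E" "{u, v} \<in> E"
  shows "simple_graph (V - {u}) ((`) (id(u := v)) ` E - {{v}})"
  unfolding simple_graph_def
proof (intro conjI ballI)
  show "finite (V - {u})"
    using assms(1) by (simp add: simple_graph_def)
  have "u \<noteq> v" "v \<in> V"
    using assms unfolding simple_graph_def by (auto simp: doubleton_eq_iff)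
  fix e
  assume "e \<in> (`) (id(u := v)) ` E - {{v}}"
  then obtain e0 where "e0 \<in> E" "e = id(u := v) ` e0" "e \<noteq> {v}"
    by blast
  moreover obtain a b where "e0 = {a, b}" "a \<noteq> b" "a \<in> V" "b \<in> V"
    using assms(1) \<open>e0 \<in> E\<close> unfolding simple_graph_def by blast
  ultimately have "a \<noteq> b" "a \<in> V" "b \<in> V" "e = {(id(u := v)) a, (id(u := v)) b}" "e \<noteq> {v}"
    by auto
  with \<open>u \<noteq> v\<close> \<open>v \<in> V\<close> show "\<exists>x y. e = {x, y} \<and> x \<noteq> y \<and> x \<in> V - {u} \<and> y \<in> V - {u}"
    by (cases "a = u"; cases "b = u") auto
qed

lemma circuit_rank_contract_le:
  assumes "simple_graph V E" "{u, v} \<in> E"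
  shows "circuit_rank (V - {u}) ((`) (id(u := v)) ` E - {{v}}) \<le> circuit_rank V E"
proof -
  let ?r = "id(u := v)" and ?F = "(`) (id(u := v)) ` E - {{v}}"
  have "finite V" "finite E"
    using assms(1) simple_graph_finite_edges simple_graph_def by blast+
  have "u \<noteq> v" "u \<in> V" "v \<in> V"
    using assms unfolding simple_graph_def by (auto simp: doubleton_eq_iff)
  have "card (V - {u}) + 1 = card V"
    using card_Suc_Diff1[OF \<open>finite V\<close> \<open>u \<in> V\<close>] by simp
  moreover have "card ?F + 1 \<le> card E"
  proof -
    have "?r ` {u, v} = {v}"
      by auto
    with assms(2) have "{v} \<in> (`) ?r ` E"
      by (metis image_eqI)
    then have "card ?F + 1 = card ((`) ?r ` E)"
      using card_Suc_Diff1[OF finite_imageI[OF \<open>finite E\<close>]] by (metis Suc_eq_plus1)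
    also have "\<dots> \<le> card E"
      using \<open>finite E\<close> by (rule card_image_le)
    finally show ?thesis .
  qed
  moreover have "num_components (?r ` V) ?F \<le> num_components V E"
  proof (rule num_components_image_le[OF \<open>finite V\<close>])
    fix x y
    assume "{x, y} \<in> E" "?r x \<noteq> ?r y"
    have "{?r x, ?r y} = ?r ` {x, y}"
      by (simp only: image_insert image_empty)
    then have "{?r x, ?r y} \<in> (`) ?r ` E"
      using \<open>{x, y} \<in> E\<close> by (rule image_eqI)
    moreover have "{?r x, ?r y} \<noteq> {v}"
      using \<open>?r x \<noteq> ?r y\<close> by (metis insertI1 insert_commute singletonD)
    ultimately show "{?r x, ?r y} \<in> ?F"
      by blast
  qed
  moreover have "?r ` V = V - {u}"
    using \<open>u \<noteq> v\<close> \<open>u \<in> V\<close> \<open>v \<in> V\<close> by auto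
  ultimately show ?thesis
    unfolding circuit_rank_def by simp
qed

lemma minor_step_simple_graph_circuit_rank_le:
  assumes "minor_step G H" "simple_graph (fst G) (snd G)"
  shows "simple_graph (fst H) (snd H) \<and> circuit_rank (fst H) (snd H) \<le> circuit_rank (fst G) (snd G)"
proof -
  obtain V E where G: "G = (V, E)"
    by fastforce
  with assms have "simple_graph V E"
    by simp
  from assms(1) consider u v where "{u, v} \<in> E" "H = contract u v (V, E)" | "subgraph H (V, E)"
    unfolding minor_step_def G by auto
  then show ?thesis
  proof cases
    case 1
    have "\<forall>e\<in>E. \<exists>a b. e = {a, b} \<and> a \<noteq> b"
      using \<open>simple_graph V E\<close> unfolding simple_graph_def by blast
    with 1 have H: "H = (V - {u}, (`) (id(u := v)) ` E - {{v}})"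
      by (simp only: contract_eq_rename)
    show ?thesis
      unfolding H G fst_conv snd_conv using \<open>simple_graph V E\<close> \<open>{u, v} \<in> E\<close>
      by (intro conjI simple_graph_contract circuit_rank_contract_le)
  next
    case 2
    then show ?thesis
      using simple_graph_subgraph circuit_rank_subgraph_le \<open>simple_graph V E\<close> G
      unfolding subgraph_def by auto
  qed
qed

lemma is_minor_simple_graph_circuit_rank_le:
  assumes "is_minor H G" "simple_graph (fst G) (snd G)"
  shows "simple_graph (fst H) (snd H) \<and> circuit_rank (fst H) (snd H) \<le> circuit_rank (fst G) (snd G)"
  using assms(1) unfolding is_minor_def
proof (induction rule: rtranclp_induct)
  case base
  then show ?case using assms(2) by simp
next
  case (step H H')
  then show ?case
    using minor_step_simple_graph_circuit_rank_le[of H H'] by auto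
qed

lemma sum_degree_eq_twice_card_edges:
  assumes "simple_graph V E"
  shows "(\<Sum>x\<in>V. degree E x) = 2 * card E"
proof -
  have "finite V" "finite E"
    using assms simple_graph_finite_edges simple_graph_def by blast+
  have "(\<Sum>x\<in>V. degree E x) = (\<Sum>x\<in>V. \<Sum>e\<in>E. if x \<in> e then 1 else 0)"
    unfolding degree_def using \<open>finite E\<close> by (simp add: sum.inter_filter[symmetric])
  also have "\<dots> = (\<Sum>e\<in>E. \<Sum>x\<in>V. if x \<in> e then 1 else 0)"
    by (rule sum.swap)
  also have "\<dots> = (\<Sum>e\<in>E. card (V \<inter> e))"
    using \<open>finite V\<close> by (simp add: sum.inter_filter[symmetric] Int_def)
  also have "\<dots> = (\<Sum>e\<in>E. 2)"
  proof (rule sum.cong[OF refl])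
    fix e
    assume "e \<in> E"
    then obtain a b where "e = {a, b}" "a \<noteq> b" "a \<in> V" "b \<in> V"
      using assms unfolding simple_graph_def by blast
    then show "card (V \<inter> e) = 2"
      by (simp add: Int_absorb1)
  qed
  finally show ?thesis
    by simp
qed

lemma min_degree_ge_card_le:
  assumes "simple_graph V E" "min_degree_ge k V E"
  shows "k * card V \<le> 2 * card E"
proof -
  have "k * card V \<le> (\<Sum>x\<in>V. degree E x)"
    using assms(2) sum_bounded_below[of V k "degree E"] unfolding min_degree_ge_def
    by (simp add: mult.commute)
  then show ?thesis
    using sum_degree_eq_twice_card_edges[OF assms(1)] by simp
qed

lemma connected_graph_num_components_le_1:
  assumes "connected_graph V E"
  shows "num_components V E \<le> 1"
proof (cases "V = {}")
  case True
  then show ?thesis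
    by (simp add: num_components_def)
next
  case False
  then obtain x where "x \<in> V"
    by blast
  have "component E y = component E x" if "y \<in> V" for y
    using assms \<open>x \<in> V\<close> that unfolding connected_graph_def component_eq_iff reachable_def by blast
  then have "component E ` V \<subseteq> {component E x}"
    by blast
  then have "card (component E ` V) \<le> card {component E x}"
    by (rule card_mono[rotated]) simp
  then show ?thesis
    unfolding num_components_def by simp
qed

lemma num_components_pos:
  assumes "finite V" "V \<noteq> {}"
  shows "num_components V E \<ge> 1"
  using assms unfolding num_components_def by (simp add: Suc_le_eq card_gt_0_iff)

theorem lemma24:
  fixes V :: "'a set" and E :: "'a set set" and m :: nat and H :: "'a set \<times> 'a set set"
  assumes "simple_graph V E"
    and "connected_graph V E"
    and "m \<ge> 1"
    and "card E + 1 = card V + m"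
    and "minor_3_core H (V, E)"
  shows "card (fst H) \<le> 2 * (m - 1)"
proof (cases "fst H = {}")
  case True
  then show ?thesis by simp
next
  case False
  have "is_minor H (V, E)" "min_degree_ge 3 (fst H) (snd H)"
    using assms(5) unfolding minor_3_core_def by auto
  then have "simple_graph (fst H) (snd H)" and rank: "circuit_rank (fst H) (snd H) \<le> circuit_rank V E"
    using is_minor_simple_graph_circuit_rank_le assms(1) by fastforce+
  have "3 * card (fst H) \<le> 2 * card (snd H)"
    using min_degree_ge_card_le \<open>simple_graph (fst H) (snd H)\<close> \<open>min_degree_ge 3 (fst H) (snd H)\<close> .
  moreover have "num_components (fst H) (snd H) \<ge> 1"
    using False \<open>simple_graph (fst H) (snd H)\<close> num_components_pos simple_graph_def by blast
  moreover have "num_components V E \<le> 1"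
    using assms(2) by (rule connected_graph_num_components_le_1)
  ultimately show ?thesis
    using rank assms(3,4) unfolding circuit_rank_def by linarith
qed

end
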